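(* Let $n\in\mathbb N$, $\alpha>0$, $1<p<\infty$ with $p\neq 2$, and $\frac1p+\frac1{p'}=1$. If $g\in\mathcal{H}^n_{p,\alpha}$ and $h\in\mathcal{H}^n_{p',\alpha}$ are both not identically zero, then \[ |\langle g,h\rangle_\alpha| < C_p^n\,\|g\|_{p,\alpha}\,\|h\|_{p',\alpha}. \]
   Context: For $\alpha>0$ and $n\in\mathbb N$, $\gamma^n_\alpha(dz)=(\alpha/\pi)^n e^{-\alpha|z|^2}\lambda^n(dz)$ on $\mathbb C^n$, with $\lambda^n$ Lebesgue measure. For $1\le p<\infty$, $\mathcal{H}^n_{p,\alpha}$ is the space of holomorphic $f$ on $\mathbb C^n$ with $\|f\|_{p,\alpha}:=\left(\int|f|^p\,d\gamma^n_{\alpha p/2}\right)^{1/p}<\infty$. $\langle f,g\rangle_\alpha=\int f\overline{g}\,d\gamma^n_\alpha$. The constant is $C_p=2\,p^{-1/p}\,(p')^{-1/p'}$. *)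

theory Defs
  imports "HOL-Analysis.Analysis"
begin

text \<open>Points of C^n are vectors z :: complex^'n, where n = CARD('n).
  The Euclidean norm on complex^'n is |z| = sqrt (sum_i |z_i|^2), and lborel on
  complex^'n is Lebesgue measure on C^n = R^(2n).\<close>

definition holomorphic_Cn :: "(complex^'n \<Rightarrow> complex) \<Rightarrow> bool" where
  "holomorphic_Cn f \<longleftrightarrow>
     (\<forall>z. \<exists>f'. (f has_derivative f') (at z) \<and> (\<forall>c v. f' (c *s v) = c * f' v))"

definition gauss_measure :: "real \<Rightarrow> (complex^'n) measure" where
  "gauss_measure \<alpha> = density lborel
     (\<lambda>z. ennreal ((\<alpha> / pi) ^ CARD('n) * exp (- \<alpha> * (norm z)\<^sup>2)))"

definition fock_space :: "real \<Rightarrow> real \<Rightarrow> (complex^'n \<Rightarrow> complex) set" where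
  "fock_space p \<alpha> = {f. holomorphic_Cn f \<and>
     integrable (gauss_measure (\<alpha> * p / 2)) (\<lambda>z. norm (f z) powr p)}"

definition fock_norm :: "real \<Rightarrow> real \<Rightarrow> (complex^'n \<Rightarrow> complex) \<Rightarrow> real" where
  "fock_norm p \<alpha> f =
     (integral\<^sup>L (gauss_measure (\<alpha> * p / 2)) (\<lambda>z. norm (f z) powr p)) powr (1 / p)"

definition fock_inner :: "real \<Rightarrow> (complex^'n \<Rightarrow> complex) \<Rightarrow> (complex^'n \<Rightarrow> complex) \<Rightarrow> complex" where
  "fock_inner \<alpha> f g = integral\<^sup>L (gauss_measure \<alpha>) (\<lambda>z. f z * cnj (g z))"

definition C_const :: "real \<Rightarrow> real \<Rightarrow> real" where
  "C_const p p' = 2 * p powr (- 1 / p) * p' powr (- 1 / p')"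

end

theory Submission
  imports Defs "HOL-Complex_Analysis.Cauchy_Integral_Formula"
begin

text \<open>Put F = |g| e^{-\<alpha>|z|^2/2} and G = |h| e^{-\<alpha>|z|^2/2}. The inner product is bounded
  by (\<alpha>/\<pi>)^n \<integral> F G, and the Fock norms of g and h are the Lebesgue L^p and L^{p'} norms
  of F and G times (\<alpha>p/2\<pi>)^{n/p} and (\<alpha>p'/2\<pi>)^{n/p'}; together with C_p^n these factors give
  exactly (\<alpha>/\<pi>)^n, so the inequality is H\<ouml>lder's inequality for F and G. Equality in H\<ouml>lder
  would force F^p = K G^{p'}, i.e. p log|g| - p' log|h| = log K + \<alpha>(p - p')|z|^2/2. On a complex
  line the left-hand side is locally the real part of a holomorphic function, hence harmonic,
  whereas |z|^2 is not; so p = p', i.e. p = 2.\<close>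

lemma weighted_geometric_mean_less:
  fixes a b l :: real
  assumes "0 < l" "l < 1" "a > 0" "b > 0" "a \<noteq> b"
  shows "a powr l * b powr (1 - l) < l * a + (1 - l) * b"
proof -
  define m where "m = l * a + (1 - l) * b"
  have m: "m > 0" using assms by (simp add: m_def add_pos_pos)
  have "a - m = (1 - l) * (a - b)" "b - m = l * (b - a)"
    by (simp_all add: m_def algebra_simps)
  then have "a \<noteq> m" "b \<noteq> m"
    using assms by auto
  then have "l * (ln a - ln m) + (1 - l) * (ln b - ln m) < l * ((a - m) / m) + (1 - l) * ((b - m) / m)"
    using assms m by (intro add_strict_mono mult_strict_left_mono ln_diff_less) auto
  also have "\<dots> = 0"
    using m by (simp add: m_def field_simps)
  finally have "l * ln a + (1 - l) * ln b < ln m"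
    by (simp add: algebra_simps)
  then have "exp (l * ln a + (1 - l) * ln b) < m"
    using m by (metis exp_less_mono exp_ln)
  then show ?thesis
    using assms by (simp add: powr_def m_def mult_exp_exp)
qed

lemma conjugate_exponent_gt_one:
  fixes p q :: real
  assumes "p > 1" "1/p + 1/q = 1"
  shows "q > 1"
proof -
  have "1/q = 1 - 1/p"
    using assms(2) by simp
  then have "0 < 1/q" "1/q < 1"
    using assms(1) by auto
  then show ?thesis
    by (simp add: divide_less_eq)
qed

lemma Youngs_inequality_strict:
  fixes a b p q :: real
  assumes p: "p > 1" and q: "q > 1" and pq: "1/p + 1/q = 1" and "a \<ge> 0" "b \<ge> 0"
    and ne: "a powr p \<noteq> b powr q"
  shows "a * b < a powr p / p + b powr q / q"
proof (cases "a = 0 \<or> b = 0")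
  case True
  then show ?thesis
    using assms by (auto simp: order_less_le)
next
  case False
  then have "(a powr p) powr (1/p) * (b powr q) powr (1 - 1/p) < 1/p * a powr p + (1 - 1/p) * b powr q"
    using assms by (intro weighted_geometric_mean_less) auto
  moreover have "1 - 1/p = 1/q"
    using pq by simp
  ultimately show ?thesis
    using assms by (simp add: powr_powr)
qed

lemma integral_pos_if_continuous:
  fixes f :: "'a::euclidean_space \<Rightarrow> real"
  assumes "continuous_on UNIV f" "\<And>x. f x \<ge> 0" "integrable lborel f" "f x0 > 0"
  shows "integral\<^sup>L lborel f > 0"
proof -
  have "integral\<^sup>L lborel f \<noteq> 0"
  proof
    assume "integral\<^sup>L lborel f = 0"
    then have "AE x in lebesgue. x \<in> {x. f x = 0}"
      using assms integral_nonneg_eq_0_iff_AE[of lborel f] by (simp add: AE_completion)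
    moreover have "closed {x. f x = 0}"
      using assms by (intro closed_Collect_eq) auto
    ultimately show False
      using assms mem_closed_if_AE_lebesgue by fastforce
  qed
  then show ?thesis
    using assms by (simp add: integral_nonneg order_less_le)
qed

lemma integral_mult_less_one:
  fixes F G :: "'a::euclidean_space \<Rightarrow> real"
  assumes p: "p > 1" and q: "q > 1" and pq: "1/p + 1/q = 1"
    and cont: "continuous_on UNIV F" "continuous_on UNIV G"
    and nonneg: "\<And>z. F z \<ge> 0" "\<And>z. G z \<ge> 0"
    and int: "integrable lborel (\<lambda>z. F z powr p)" "integrable lborel (\<lambda>z. G z powr q)"
    and norm1: "integral\<^sup>L lborel (\<lambda>z. F z powr p) = 1" "integral\<^sup>L lborel (\<lambda>z. G z powr q) = 1"
    and ne: "F z0 powr p \<noteq> G z0 powr q"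
  shows "integral\<^sup>L lborel (\<lambda>z. F z * G z) < 1"
proof -
  define S where "S z = F z powr p / p + G z powr q / q" for z
  define D where "D z = S z - F z * G z" for z
  have young: "F z * G z \<le> S z" for z
    unfolding S_def using p q pq nonneg by (intro Youngs_inequality) auto
  have contS: "continuous_on UNIV S"
    unfolding S_def using p q nonneg
    by (intro continuous_intros continuous_on_powr' cont) auto
  have intS: "integrable lborel S"
    unfolding S_def using int by auto
  have intFG: "integrable lborel (\<lambda>z. F z * G z)"
  proof (rule Bochner_Integration.integrable_bound[OF intS])
    show "(\<lambda>z. F z * G z) \<in> borel_measurable lborel"
      using borel_measurable_continuous_onI[OF continuous_on_mult[OF cont]] by simp
    show "AE z in lborel. norm (F z * G z) \<le> norm (S z)"
      using young nonneg by (auto intro!: AE_I2 order.trans[OF _ abs_ge_self])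
  qed
  have "integral\<^sup>L lborel S = 1"
    unfolding S_def using int norm1 pq by simp
  moreover have "integral\<^sup>L lborel D > 0"
  proof (rule integral_pos_if_continuous)
    show "continuous_on UNIV D"
      unfolding D_def by (intro continuous_intros contS cont)
    show "integrable lborel D"
      unfolding D_def using intS intFG by auto
    show "D z0 > 0"
      unfolding D_def S_def using Youngs_inequality_strict[OF p q pq nonneg(1,2) ne] by simp
  qed (use young in \<open>simp add: D_def\<close>)
  moreover have "integral\<^sup>L lborel D = integral\<^sup>L lborel S - integral\<^sup>L lborel (\<lambda>z. F z * G z)"
    unfolding D_def using intS intFG by simp
  ultimately show ?thesis
    by simp
qed

lemma Holder_inequality_strict:
  fixes F G :: "'a::euclidean_space \<Rightarrow> real"
  assumes p: "p > 1" and q: "q > 1" and pq: "1/p + 1/q = 1"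
    and cont: "continuous_on UNIV F" "continuous_on UNIV G"
    and nonneg: "\<And>z. F z \<ge> 0" "\<And>z. G z \<ge> 0"
    and int: "integrable lborel (\<lambda>z. F z powr p)" "integrable lborel (\<lambda>z. G z powr q)"
    and pos: "F z1 > 0" "G z2 > 0"
    and not_prop: "\<And>K. K > 0 \<Longrightarrow> \<exists>z. F z powr p \<noteq> K * G z powr q"
  shows "integral\<^sup>L lborel (\<lambda>z. F z * G z)
           < (integral\<^sup>L lborel (\<lambda>z. F z powr p)) powr (1/p) * (integral\<^sup>L lborel (\<lambda>z. G z powr q)) powr (1/q)"
proof -
  define IF where "IF = integral\<^sup>L lborel (\<lambda>z. F z powr p)"
  define IG where "IG = integral\<^sup>L lborel (\<lambda>z. G z powr q)"
  have contp: "continuous_on UNIV (\<lambda>z. F z powr p)" "continuous_on UNIV (\<lambda>z. G z powr q)"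
    using p q nonneg by (auto intro!: continuous_on_powr' cont)
  have IF: "IF > 0"
    unfolding IF_def using pos nonneg by (intro integral_pos_if_continuous[OF contp(1) _ int(1), of z1]) auto
  have IG: "IG > 0"
    unfolding IG_def using pos nonneg by (intro integral_pos_if_continuous[OF contp(2) _ int(2), of z2]) auto
  define A where "A = IF powr (1/p)"
  define B where "B = IG powr (1/q)"
  have A: "A > 0" "A powr p = IF" and B: "B > 0" "B powr q = IG"
    using IF IG p q by (auto simp: A_def B_def powr_powr)
  have Fp: "(F z / A) powr p = F z powr p / IF" and Gq: "(G z / B) powr q = G z powr q / IG" for z
    using nonneg A B by (simp_all add: powr_divide)
  obtain z0 where z0: "F z0 powr p \<noteq> (IF / IG) * G z0 powr q"
    using not_prop[of "IF / IG"] IF IG by auto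
  have "integral\<^sup>L lborel (\<lambda>z. (F z / A) * (G z / B)) < 1"
  proof (rule integral_mult_less_one[OF p q pq])
    show "(F z0 / A) powr p \<noteq> (G z0 / B) powr q"
      using z0 IF IG by (auto simp: Fp Gq field_simps)
  qed (use cont nonneg int IF IG A B in \<open>auto simp: Fp Gq IF_def IG_def intro!: continuous_intros\<close>)
  then have "integral\<^sup>L lborel (\<lambda>z. F z * G z) / (A * B) < 1"
    by (simp add: field_simps)
  then show ?thesis
    using A B by (simp add: A_def B_def IF_def IG_def)
qed

lemma Re_deriv_of_real_eq:
  fixes f :: "complex \<Rightarrow> complex"
  assumes f: "f holomorphic_on ball 0 r"
    and eq: "\<And>x. \<bar>x\<bar> < r \<Longrightarrow> Re (f (of_real x)) = \<phi> x"
    and \<phi>: "(\<phi> has_real_derivative \<phi>') (at x)" and x: "\<bar>x\<bar> < r"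
  shows "Re (deriv f (of_real x)) = \<phi>'"
proof -
  have "(f has_field_derivative deriv f (of_real x)) (at (of_real x))"
    using x by (intro holomorphic_derivI[OF f]) auto
  then have "((\<lambda>x. Re (f (of_real x))) has_real_derivative Re (deriv f (of_real x))) (at x)"
    by (intro has_field_derivative_Re has_vector_derivative_real_field)
  moreover have "((\<lambda>x. Re (f (of_real x))) has_real_derivative \<phi>') (at x)"
    using x by (intro has_field_derivative_transform_within_open[OF \<phi>, of "{-r<..<r}"]) (auto simp: eq)
  ultimately show ?thesis
    by (rule DERIV_unique)
qed

lemma holomorphic_Re_quadratic_imp_zero:
  fixes H :: "complex \<Rightarrow> complex"
  assumes H: "H holomorphic_on ball 0 r" and "r > 0"
    and eq: "\<And>t. t \<in> ball 0 r \<Longrightarrow> Re (H t) = c + \<beta> * (norm t)\<^sup>2"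
  shows "\<beta> = 0"
proof -
  \<comment> \<open>On the real axis Re k = 2c + 2\<beta>x^2, so Re k''(0) = 4\<beta>; but k''(0) = H''(0) + \<i>^2 H''(0) = 0.\<close>
  define k where "k s = H s + H (\<i> * s)" for s
  have Hi: "(\<lambda>s. H (\<i> * s)) holomorphic_on ball 0 r"
    by (rule holomorphic_on_compose_gen[OF _ H, unfolded o_def]) (auto intro!: holomorphic_intros simp: norm_mult)
  have k: "k holomorphic_on ball 0 r"
    unfolding k_def using H Hi by (intro holomorphic_intros)
  have "Re (k (of_real x)) = 2 * c + 2 * \<beta> * x\<^sup>2" if "\<bar>x\<bar> < r" for x
    using that eq[of "of_real x"] eq[of "\<i> * of_real x"] by (simp add: k_def norm_mult)
  then have "Re (deriv k (of_real x)) = 4 * \<beta> * x" if "\<bar>x\<bar> < r" for x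
    using that by (intro Re_deriv_of_real_eq[OF k]) (auto intro!: derivative_eq_intros)
  then have "Re (deriv (deriv k) 0) = 4 * \<beta>"
    using \<open>r > 0\<close> Re_deriv_of_real_eq[OF holomorphic_deriv[OF k], of "\<lambda>x. 4 * \<beta> * x" "4 * \<beta>" 0]
    by (auto intro!: derivative_eq_intros)
  moreover have "(deriv ^^ 2) (\<lambda>s. H (\<i> * s)) 0 = \<i>\<^sup>2 * (deriv ^^ 2) H 0"
    using higher_deriv_compose_linear[OF H, of "ball 0 r" 0 \<i>] \<open>r > 0\<close> by (simp add: norm_mult)
  then have "(deriv ^^ 2) k 0 = 0"
    unfolding k_def using \<open>r > 0\<close> by (simp add: higher_deriv_add[OF H Hi])
  ultimately show ?thesis
    by (simp add: numeral_2_eq_2)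
qed

lemma bounded_linear_vector_scalar_mult:
  "bounded_linear (\<lambda>t::complex. t *s (e::complex^'n))"
  by (rule bounded_linearI') (simp_all add: vector_sadd_rdistrib vec_eq_iff)

lemma holomorphic_Cn_imp_continuous: "holomorphic_Cn f \<Longrightarrow> continuous_on UNIV f"
  unfolding holomorphic_Cn_def
  by (meson continuous_at_imp_continuous_on has_derivative_continuous)

lemma holomorphic_Cn_borel_measurable: "holomorphic_Cn g \<Longrightarrow> g \<in> borel_measurable lborel"
  using borel_measurable_continuous_onI[OF holomorphic_Cn_imp_continuous] by simp

lemma holomorphic_Cn_on_line:
  assumes "holomorphic_Cn g"
  shows "(\<lambda>t. g (z0 + t *s e)) holomorphic_on UNIV"
proof -
  have "\<exists>D. ((\<lambda>t. g (z0 + t *s e)) has_field_derivative D) (at t)" for t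
  proof -
    obtain g' where g': "(g has_derivative g') (at (z0 + t *s e))" and lin: "\<And>c v. g' (c *s v) = c * g' v"
      using assms unfolding holomorphic_Cn_def by blast
    have "((\<lambda>t. z0 + t *s e) has_derivative (\<lambda>s. s *s e)) (at t)"
      using bounded_linear.has_derivative[OF bounded_linear_vector_scalar_mult[of e], of "\<lambda>t. t" "\<lambda>t. t"]
      by (auto intro!: derivative_eq_intros)
    from diff_chain_at[OF this g'] have "((\<lambda>t. g (z0 + t *s e)) has_derivative (\<lambda>s. g' e * s)) (at t)"
      by (simp add: o_def lin mult.commute)
    then show ?thesis
      unfolding has_field_derivative_def by blast
  qed
  then show ?thesis
    by (simp add: holomorphic_on_open field_differentiable_def)
qed

lemma norm_add_axis_squared:
  "(norm (z0 + t *s axis k (1::complex) :: complex^'n))\<^sup>2 = (norm z0)\<^sup>2 + 2 * Re (cnj (z0$k) * t) + (cmod t)\<^sup>2"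
proof -
  have norm_sq: "(norm x)\<^sup>2 = (\<Sum>i\<in>UNIV. (cmod (x$i))\<^sup>2)" for x :: "complex^'n"
    unfolding norm_vec_def L2_set_def by (simp add: sum_nonneg)
  have "(cmod (z0$k + t))\<^sup>2 = (cmod (z0$k))\<^sup>2 + 2 * Re (cnj (z0$k) * t) + (cmod t)\<^sup>2"
    unfolding cmod_power2 by (simp add: power2_eq_square algebra_simps)
  then have "(norm (z0 + t *s axis k 1))\<^sup>2 = (\<Sum>i\<in>UNIV. (cmod (z0$i))\<^sup>2 + (if i = k then 2 * Re (cnj (z0$k) * t) + (cmod t)\<^sup>2 else 0))"
    unfolding norm_sq by (intro sum.cong refl) (auto simp: axis_def)
  then show ?thesis
    by (simp add: sum.distrib norm_sq)
qed

lemma holomorphic_Ln_near_one: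
  fixes u :: "complex \<Rightarrow> complex"
  assumes u: "u holomorphic_on UNIV" and "u 0 = 1"
  obtains d where "d > 0" "(\<lambda>t. Ln (u t)) holomorphic_on ball 0 d" "\<And>t. t \<in> ball 0 d \<Longrightarrow> u t \<noteq> 0"
proof -
  have "open {t. 0 < Re (u t)}"
    using holomorphic_on_imp_continuous_on[OF u] by (intro open_Collect_less continuous_intros) auto
  then obtain d where d: "d > 0" "ball 0 d \<subseteq> {t. 0 < Re (u t)}"
    using \<open>u 0 = 1\<close> by (metis mem_Collect_eq one_complex.simps(1) openE zero_less_one)
  then have "u t \<notin> \<real>\<^sub>\<le>\<^sub>0" if "t \<in> ball 0 d" for t
    using that by (auto simp: complex_nonpos_Reals_iff)
  then have "(\<lambda>t. Ln (u t)) holomorphic_on ball 0 d"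
    by (intro holomorphic_intros holomorphic_on_subset[OF u]) auto
  with d show ?thesis
    using that by force
qed

lemma holomorphic_Cn_log_moduli_not_quadratic:
  fixes g h :: "complex^'n \<Rightarrow> complex"
  assumes hg: "holomorphic_Cn g" and hh: "holomorphic_Cn h" and "\<beta> \<noteq> 0" and g0: "g z0 \<noteq> 0"
    and eq: "\<And>z. g z \<noteq> 0 \<Longrightarrow> h z \<noteq> 0 \<and> p * ln (norm (g z)) - q * ln (norm (h z)) = \<beta> * (norm z)\<^sup>2 + c"
  shows False
proof -
  \<comment> \<open>Any coordinate axis will do.\<close>
  define k :: 'n where "k = undefined"
  define line where "line t = z0 + t *s axis k 1" for t
  define u where "u t = g (line t) / g z0" for t
  define v where "v t = h (line t) / h z0" for t
  have h0: "h z0 \<noteq> 0"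
    using eq g0 by blast
  have "(\<lambda>t. g (line t)) holomorphic_on UNIV" "(\<lambda>t. h (line t)) holomorphic_on UNIV"
    unfolding line_def by (intro holomorphic_Cn_on_line hg hh)+
  then have "u holomorphic_on UNIV" "v holomorphic_on UNIV"
    unfolding u_def v_def by (auto intro!: holomorphic_intros)
  moreover have "u 0 = 1" "v 0 = 1"
    using g0 h0 by (simp_all add: u_def v_def line_def)
  ultimately obtain d1 d2 where d: "d1 > 0" "d2 > 0"
    and hol: "(\<lambda>t. Ln (u t)) holomorphic_on ball 0 d1" "(\<lambda>t. Ln (v t)) holomorphic_on ball 0 d2"
    and nz: "\<And>t. t \<in> ball 0 d1 \<Longrightarrow> u t \<noteq> 0" "\<And>t. t \<in> ball 0 d2 \<Longrightarrow> v t \<noteq> 0"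
    by (metis holomorphic_Ln_near_one)
  \<comment> \<open>The linear term cancels the cross term 2 Re (cnj (z0$k) * t) of |line t|^2.\<close>
  define H where "H t = p * Ln (u t) - q * Ln (v t) - 2 * \<beta> * cnj (z0$k) * t" for t
  have "H holomorphic_on ball 0 (min d1 d2)"
    unfolding H_def by (intro holomorphic_intros holomorphic_on_subset[OF hol(1)] holomorphic_on_subset[OF hol(2)]) auto
  moreover have "Re (H t) = (\<beta> * (norm z0)\<^sup>2 + c - p * ln (cmod (g z0)) + q * ln (cmod (h z0))) + \<beta> * (cmod t)\<^sup>2"
    if t: "t \<in> ball 0 (min d1 d2)" for t
  proof -
    have "g (line t) \<noteq> 0"
      using nz(1) t by (simp add: u_def)
    with eq have "h (line t) \<noteq> 0"
      and E: "p * ln (norm (g (line t))) - q * ln (norm (h (line t))) = \<beta> * (norm (line t))\<^sup>2 + c"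
      by auto
    then have "Re (H t) = (p * ln (cmod (g (line t))) - q * ln (cmod (h (line t))))
        - p * ln (cmod (g z0)) + q * ln (cmod (h z0)) - 2 * \<beta> * Re (cnj (z0$k) * t)"
      using \<open>g (line t) \<noteq> 0\<close> g0 h0
      by (simp add: H_def u_def v_def Re_Ln norm_divide ln_div mult.assoc algebra_simps)
    also have "\<dots> = (\<beta> * (norm z0)\<^sup>2 + c - p * ln (cmod (g z0)) + q * ln (cmod (h z0))) + \<beta> * (cmod t)\<^sup>2"
      unfolding E by (simp add: line_def norm_add_axis_squared algebra_simps)
    finally show ?thesis .
  qed
  ultimately have "\<beta> = 0"
    using d by (intro holomorphic_Re_quadratic_imp_zero[of H "min d1 d2"]) auto
  with \<open>\<beta> \<noteq> 0\<close> show False ..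
qed

definition gauss_modulus :: "real \<Rightarrow> (complex^'n \<Rightarrow> complex) \<Rightarrow> complex^'n \<Rightarrow> real" where
  "gauss_modulus \<alpha> f z = norm (f z) * exp (- \<alpha> * (norm z)\<^sup>2 / 2)"

lemma gauss_measure_integral:
  fixes f :: "complex^'n \<Rightarrow> 'b::{banach, second_countable_topology}"
  assumes "\<beta> > 0" and f: "f \<in> borel_measurable lborel"
  shows "integral\<^sup>L (gauss_measure \<beta>) f
          = integral\<^sup>L lborel (\<lambda>z. ((\<beta>/pi)^CARD('n) * exp (- \<beta> * (norm z)\<^sup>2)) *\<^sub>R f z)"
    and "integrable (gauss_measure \<beta>) f
          \<longleftrightarrow> integrable lborel (\<lambda>z. ((\<beta>/pi)^CARD('n) * exp (- \<beta> * (norm z)\<^sup>2)) *\<^sub>R f z)"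
proof -
  have w: "(\<lambda>z::complex^'n. (\<beta>/pi)^CARD('n) * exp (- \<beta> * (norm z)\<^sup>2)) \<in> borel_measurable lborel"
    by measurable
  have "AE z in lborel. 0 \<le> (\<beta>/pi)^CARD('n) * exp (- \<beta> * (norm (z::complex^'n))\<^sup>2)"
    using \<open>\<beta> > 0\<close> by simp
  then show "integral\<^sup>L (gauss_measure \<beta>) f
          = integral\<^sup>L lborel (\<lambda>z. ((\<beta>/pi)^CARD('n) * exp (- \<beta> * (norm z)\<^sup>2)) *\<^sub>R f z)"
    and "integrable (gauss_measure \<beta>) f
          \<longleftrightarrow> integrable lborel (\<lambda>z. ((\<beta>/pi)^CARD('n) * exp (- \<beta> * (norm z)\<^sup>2)) *\<^sub>R f z)"
    unfolding gauss_measure_def using integral_density[OF f w] integrable_density[OF f w] by auto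
qed

lemma fock_norm_eq_gauss_modulus:
  fixes g :: "complex^'n \<Rightarrow> complex"
  assumes "\<alpha> > 0" "p > 0" and g: "g \<in> borel_measurable lborel"
  shows "integrable (gauss_measure (\<alpha> * p / 2)) (\<lambda>z. norm (g z) powr p)
           \<longleftrightarrow> integrable lborel (\<lambda>z. gauss_modulus \<alpha> g z powr p)"
    and "fock_norm p \<alpha> g = ((\<alpha> * p / 2 / pi) powr (1/p)) ^ CARD('n)
           * (integral\<^sup>L lborel (\<lambda>z. gauss_modulus \<alpha> g z powr p)) powr (1/p)"
proof -
  define c where "c = (\<alpha> * p / 2 / pi) ^ CARD('n)"
  have c: "c > 0" and ap: "\<alpha> * p / 2 > 0"
    using assms by (simp_all add: c_def)
  have meas: "(\<lambda>z. norm (g z) powr p) \<in> borel_measurable lborel"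
    using g by measurable
  have weight: "((\<alpha> * p / 2 / pi)^CARD('n) * exp (- (\<alpha> * p / 2) * (norm z)\<^sup>2)) *\<^sub>R (norm (g z) powr p)
        = c * gauss_modulus \<alpha> g z powr p" for z
    by (simp add: c_def gauss_modulus_def powr_mult exp_powr_real algebra_simps)
  show "integrable (gauss_measure (\<alpha> * p / 2)) (\<lambda>z. norm (g z) powr p)
           \<longleftrightarrow> integrable lborel (\<lambda>z. gauss_modulus \<alpha> g z powr p)"
    unfolding gauss_measure_integral(2)[OF ap meas] weight using c by simp
  have "fock_norm p \<alpha> g = (c * integral\<^sup>L lborel (\<lambda>z. gauss_modulus \<alpha> g z powr p)) powr (1/p)"
    unfolding fock_norm_def gauss_measure_integral(1)[OF ap meas] weight by simp
  also have "\<dots> = c powr (1/p) * (integral\<^sup>L lborel (\<lambda>z. gauss_modulus \<alpha> g z powr p)) powr (1/p)"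
    using c by (simp add: powr_mult integral_nonneg)
  also have "c powr (1/p) = ((\<alpha> * p / 2 / pi) powr (1/p)) ^ CARD('n)"
  proof -
    define x where "x = \<alpha> * p / 2 / pi"
    have "x > 0"
      using ap by (simp add: x_def)
    then have "(x ^ CARD('n)) powr (1/p) = x powr (CARD('n) / p)"
      by (simp add: powr_powr flip: powr_realpow)
    also have "\<dots> = (x powr (1/p)) ^ CARD('n)"
      using powr_power[of x "1/p" "CARD('n)"] \<open>x > 0\<close> by simp
    finally show ?thesis
      by (simp add: c_def x_def)
  qed
  finally show "fock_norm p \<alpha> g = ((\<alpha> * p / 2 / pi) powr (1/p)) ^ CARD('n)
           * (integral\<^sup>L lborel (\<lambda>z. gauss_modulus \<alpha> g z powr p)) powr (1/p)" .
qed

lemma norm_fock_inner_le: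
  fixes g h :: "complex^'n \<Rightarrow> complex"
  assumes "\<alpha> > 0" "g \<in> borel_measurable lborel" "h \<in> borel_measurable lborel"
  shows "norm (fock_inner \<alpha> g h)
           \<le> (\<alpha>/pi)^CARD('n) * integral\<^sup>L lborel (\<lambda>z. gauss_modulus \<alpha> g z * gauss_modulus \<alpha> h z)"
proof -
  have "cnj \<in> borel_measurable borel"
    by (intro borel_measurable_continuous_onI continuous_intros)
  then have "(\<lambda>z. g z * cnj (h z)) \<in> borel_measurable lborel"
    using assms by measurable
  then have "norm (fock_inner \<alpha> g h)
      = norm (integral\<^sup>L lborel (\<lambda>z. ((\<alpha>/pi)^CARD('n) * exp (- \<alpha> * (norm z)\<^sup>2)) *\<^sub>R (g z * cnj (h z))))"
    unfolding fock_inner_def using assms by (simp add: gauss_measure_integral(1))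
  also have "\<dots> \<le> integral\<^sup>L lborel (\<lambda>z. norm (((\<alpha>/pi)^CARD('n) * exp (- \<alpha> * (norm z)\<^sup>2)) *\<^sub>R (g z * cnj (h z))))"
    by (rule integral_norm_bound)
  also have "\<dots> = integral\<^sup>L lborel (\<lambda>z. (\<alpha>/pi)^CARD('n) * (gauss_modulus \<alpha> g z * gauss_modulus \<alpha> h z))"
    using assms by (simp add: gauss_modulus_def norm_mult abs_mult algebra_simps flip: exp_add)
  finally show ?thesis
    by simp
qed

lemma gauss_moduli_powers_not_proportional:
  fixes g h :: "complex^'n \<Rightarrow> complex"
  assumes "\<alpha> > 0" "p \<noteq> q" and hg: "holomorphic_Cn g" and hh: "holomorphic_Cn h"
    and "g z1 \<noteq> 0" and K: "K > 0"
  shows "\<exists>z. gauss_modulus \<alpha> g z powr p \<noteq> K * gauss_modulus \<alpha> h z powr q"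
proof (rule ccontr)
  assume "\<not> ?thesis"
  then have eqK: "gauss_modulus \<alpha> g z powr p = K * gauss_modulus \<alpha> h z powr q" for z
    by simp
  show False
  proof (rule holomorphic_Cn_log_moduli_not_quadratic[OF hg hh _ \<open>g z1 \<noteq> 0\<close>])
    show "\<alpha> * (p - q) / 2 \<noteq> 0"
      using assms by simp
  next
    fix z
    assume "g z \<noteq> 0"
    then have "gauss_modulus \<alpha> h z \<noteq> 0"
      using eqK[of z] by (auto simp: gauss_modulus_def)
    then have hz: "h z \<noteq> 0"
      by (auto simp: gauss_modulus_def)
    have "ln (gauss_modulus \<alpha> g z powr p) = ln (K * gauss_modulus \<alpha> h z powr q)"
      using eqK by simp
    then have "p * ln (norm (g z)) - q * ln (norm (h z)) = \<alpha> * (p - q) / 2 * (norm z)\<^sup>2 + ln K"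
      using \<open>g z \<noteq> 0\<close> hz K by (simp add: gauss_modulus_def ln_powr ln_mult field_simps)
    with hz show "h z \<noteq> 0 \<and> p * ln (norm (g z)) - q * ln (norm (h z)) = \<alpha> * (p - q) / 2 * (norm z)\<^sup>2 + ln K"
      by simp
  qed
qed

lemma C_const_mult_gauss_factors:
  assumes "\<alpha> > 0" "p > 1" "q > 1" "1/p + 1/q = 1"
  shows "C_const p q * (\<alpha> * p / 2 / pi) powr (1/p) * (\<alpha> * q / 2 / pi) powr (1/q) = \<alpha> / pi"
proof -
  define r where "r = \<alpha> / (2 * pi)"
  have r: "r > 0"
    using assms by (simp add: r_def)
  have "(\<alpha> * p / 2 / pi) powr (1/p) = r powr (1/p) * p powr (1/p)"
    "(\<alpha> * q / 2 / pi) powr (1/q) = r powr (1/q) * q powr (1/q)"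
    using assms by (simp_all add: r_def powr_mult[symmetric] field_simps)
  then have "C_const p q * (\<alpha> * p / 2 / pi) powr (1/p) * (\<alpha> * q / 2 / pi) powr (1/q)
      = 2 * (r powr (1/p) * r powr (1/q)) * (p powr (- 1 / p) * p powr (1/p)) * (q powr (- 1 / q) * q powr (1/q))"
    unfolding C_const_def by (simp add: algebra_simps)
  also have "\<dots> = 2 * r"
    using assms r by (simp add: powr_add[symmetric])
  finally show ?thesis
    by (simp add: r_def)
qed

lemma holomorphic_Cn_gauss_modulus:
  assumes "holomorphic_Cn g"
  shows "continuous_on UNIV (gauss_modulus \<alpha> g)"
    "gauss_modulus \<alpha> g z \<ge> 0" "g z \<noteq> 0 \<Longrightarrow> gauss_modulus \<alpha> g z > 0"
  using holomorphic_Cn_imp_continuous[OF assms]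
  by (auto simp: gauss_modulus_def intro!: continuous_intros)

theorem theorem1p4:
  fixes g h :: "complex^'n \<Rightarrow> complex" and \<alpha> p p' :: real
  assumes "\<alpha> > 0" and "1 < p" and "p \<noteq> 2" and "1 / p + 1 / p' = 1"
    and "g \<in> fock_space p \<alpha>" and "h \<in> fock_space p' \<alpha>"
    and "\<exists>z. g z \<noteq> 0" and "\<exists>z. h z \<noteq> 0"
  shows "norm (fock_inner \<alpha> g h)
           < C_const p p' ^ CARD('n) * fock_norm p \<alpha> g * fock_norm p' \<alpha> h"
proof -
  have "p' > 1"
    using assms conjugate_exponent_gt_one by blast
  have "p \<noteq> p'"
    using assms by auto
  obtain z1 z2 where "g z1 \<noteq> 0" "h z2 \<noteq> 0"
    using assms by blast
  have g: "holomorphic_Cn g" and h: "holomorphic_Cn h"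
    using assms by (auto simp: fock_space_def)
  note G = holomorphic_Cn_gauss_modulus[OF g, where \<alpha>=\<alpha>] holomorphic_Cn_borel_measurable[OF g]
    and H = holomorphic_Cn_gauss_modulus[OF h, where \<alpha>=\<alpha>] holomorphic_Cn_borel_measurable[OF h]
  have int: "integrable lborel (\<lambda>z. gauss_modulus \<alpha> g z powr p)"
    "integrable lborel (\<lambda>z. gauss_modulus \<alpha> h z powr p')"
    using assms \<open>p' > 1\<close> G(4) H(4) by (auto simp: fock_space_def fock_norm_eq_gauss_modulus(1))
  have "norm (fock_inner \<alpha> g h)
      \<le> (\<alpha>/pi)^CARD('n) * integral\<^sup>L lborel (\<lambda>z. gauss_modulus \<alpha> g z * gauss_modulus \<alpha> h z)"
    using assms G H by (intro norm_fock_inner_le)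
  also have "\<dots> < (\<alpha>/pi)^CARD('n) * ((integral\<^sup>L lborel (\<lambda>z. gauss_modulus \<alpha> g z powr p)) powr (1/p)
      * (integral\<^sup>L lborel (\<lambda>z. gauss_modulus \<alpha> h z powr p')) powr (1/p'))"
    using assms \<open>p' > 1\<close> \<open>p \<noteq> p'\<close> \<open>g z1 \<noteq> 0\<close> \<open>h z2 \<noteq> 0\<close> g h G H int
    by (intro mult_strict_left_mono Holder_inequality_strict gauss_moduli_powers_not_proportional) auto
  also have "\<dots> = C_const p p' ^ CARD('n) * fock_norm p \<alpha> g * fock_norm p' \<alpha> h"
    using assms \<open>p' > 1\<close> G H
    by (simp add: fock_norm_eq_gauss_modulus(2) C_const_mult_gauss_factors[symmetric] power_mult_distrib)
  finally show ?thesis .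
qed

end
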